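(* For $i=1,2$, let $[x^{(i)}_k]_{k=0}^N$ be a zero-mean nonsingular Gaussian Markov sequence obeying the forward Markov model $$x^{(i)}_k=M^{(i)}_{k,k-1}x^{(i)}_{k-1}+e^{M,(i)}_k,\ k\in[1,N],\qquad x^{(i)}_0=e^{M,(i)}_0,$$ where $[e^{M,(i)}_k]$ is a zero-mean white nonsingular Gaussian sequence with $\mathrm{Cov}(e^{M,(i)}_k)=M^{(i)}_k$. Then the two sequences share the same reciprocal model if and only if $$(M^{(1)}_k)^{-1}+(M^{(1)}_{k+1,k})'(M^{(1)}_{k+1})^{-1}M^{(1)}_{k+1,k}=(M^{(2)}_k)^{-1}+(M^{(2)}_{k+1,k})'(M^{(2)}_{k+1})^{-1}M^{(2)}_{k+1,k},\quad k\in[1,N-1],$$ and $$(M^{(1)}_{k+1,k})'(M^{(1)}_{k+1})^{-1}=(M^{(2)}_{k+1,k})'(M^{(2)}_{k+1})^{-1},\quad k\in[0,N-1].$$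
   Context: $[0,N]=(0,1,\ldots,N)$; $x=[x_0',\ldots,x_N']'$, $C=\mathrm{Cov}(x)$, $'$ denotes transpose. Every zero-mean nonsingular Gaussian Markov sequence is reciprocal and obeys a reciprocal model $R^0_kx_k-R^-_kx_{k-1}-R^+_kx_{k+1}=e^R_k$, $k\in[1,N-1]$, whose coefficients are determined by the block entries of $C^{-1}$: writing $A_k$ for the $(k,k)$ block and $B_k$ for the $(k,k+1)$ block of $C^{-1}$ (blocks indexed from $0$), $R^0_k=A_k$, $R^+_k=-B_k$, $R^-_k=-B_{k-1}'$. Two sequences share the same reciprocal model if these coefficients $R^0_k,R^-_k,R^+_k$, $k\in[1,N-1]$, coincide, i.e. their $C^{-1}$ have the same blocks $A_1,\ldots,A_{N-1}$ and $B_0,\ldots,B_{N-1}$. *)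

theory Defs
  imports "Jordan_Normal_Form.Matrix"
begin

definition minv :: "real mat \<Rightarrow> real mat" where
  "minv A = (SOME B. B \<in> carrier_mat (dim_row A) (dim_row A) \<and>
                     A * B = 1\<^sub>m (dim_row A) \<and> B * A = 1\<^sub>m (dim_row A))"

text \<open>Symmetric positive definite d x d matrix (nonsingular covariance).\<close>
definition spd :: "nat \<Rightarrow> real mat \<Rightarrow> bool" where
  "spd d A \<longleftrightarrow> A \<in> carrier_mat d d \<and> A\<^sup>T = A \<and>
     (\<forall>v \<in> carrier_vec d. v \<noteq> 0\<^sub>v d \<longrightarrow> v \<bullet> (A *\<^sub>v v) > 0)"

text \<open>Forward Markov model x_k = F k x_{k-1} + e_k (F k = M_{k,k-1}), x_0 = e_0,
  Cov(e_k) = Q k = M_k, e white. State transition matrix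
  Phi(j+m, j) = F (j+m) * ... * F (j+1) is  trans F d j m.\<close>
fun trans :: "(nat \<Rightarrow> real mat) \<Rightarrow> nat \<Rightarrow> nat \<Rightarrow> nat \<Rightarrow> real mat" where
  "trans F d j 0 = 1\<^sub>m d"
| "trans F d j (Suc m) = F (j + Suc m) * trans F d j m"

definition Phi :: "(nat \<Rightarrow> real mat) \<Rightarrow> nat \<Rightarrow> nat \<Rightarrow> nat \<Rightarrow> real mat" where
  "Phi F d k j = trans F d j (k - j)"

text \<open>Covariance C = Cov(x) of the stacked vector x = [x_0',...,x_N']' of the model:
  since x_k = sum_{j<=k} Phi(k,j) e_j with e white,
  C_{k,l} = sum_{j <= min k l} Phi(k,j) M_j Phi(l,j)'.
  Entry (k*d+a, l*d+b) is entry (a,b) of block (k,l).\<close>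
definition markov_cov :: "nat \<Rightarrow> nat \<Rightarrow> (nat \<Rightarrow> real mat) \<Rightarrow> (nat \<Rightarrow> real mat) \<Rightarrow> real mat" where
  "markov_cov d N F Q = mat ((N+1)*d) ((N+1)*d) (\<lambda>(i,i').
     let k = i div d; a = i mod d; l = i' div d; b = i' mod d in
     (\<Sum>j\<in>{0..min k l}. \<Sum>p<d. \<Sum>q<d.
        Phi F d k j $$ (a,p) * Q j $$ (p,q) * Phi F d l j $$ (b,q)))"

definition blk :: "nat \<Rightarrow> real mat \<Rightarrow> nat \<Rightarrow> nat \<Rightarrow> real mat" where
  "blk d C k l = mat d d (\<lambda>(a,b). C $$ (k*d + a, l*d + b))"

text \<open>Two sequences with covariances C1, C2 share the same reciprocal model iff
  C^{-1} have the same blocks A_k = (k,k), k in [1,N-1], and B_k = (k,k+1), k in [0,N-1].\<close>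
definition same_reciprocal_model :: "nat \<Rightarrow> nat \<Rightarrow> real mat \<Rightarrow> real mat \<Rightarrow> bool" where
  "same_reciprocal_model d N C1 C2 \<longleftrightarrow>
     (\<forall>k. 1 \<le> k \<and> k < N \<longrightarrow> blk d (minv C1) k k = blk d (minv C2) k k) \<and>
     (\<forall>k. k < N \<longrightarrow> blk d (minv C1) k (k+1) = blk d (minv C2) k (k+1))"

end

theory Submission
  imports Defs "Jordan_Normal_Form.Determinant"
begin

text \<open>Stack the innovations into e = [e_0; ...; e_N]. Then x = G e, where G is block lower
  triangular with the state transition matrices Phi(k,j) as blocks, so C = G D G' with
  D = diag(M_0, ..., M_N). Read backwards, the model says e_k = x_k - M_{k,k-1} x_{k-1}: G is
  inverted by the block bidiagonal matrix L with identity blocks on the diagonal and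
  -M_{k,k-1} below it. Hence C^{-1} = L' D^{-1} L is block tridiagonal, with (k,k) block
  M_k^{-1} + M_{k+1,k}' M_{k+1}^{-1} M_{k+1,k} for k < N and (k,k+1) block
  -M_{k+1,k}' M_{k+1}^{-1}, and two models share a reciprocal model iff these blocks agree.\<close>

lemma block_index_less:
  assumes "m < n" "c < d"
  shows "m*d + c < n*(d::nat)"
proof -
  have "(m+1)*d \<le> n*d" using assms(1) by (intro mult_le_mono1) simp
  then show ?thesis using assms(2) by simp
qed

lemma block_div_less: "i < n*d \<Longrightarrow> i div d < (n::nat)"
  by (simp add: less_mult_imp_div_less)

lemma block_mod_less: "i < n*d \<Longrightarrow> i mod d < (d::nat)"
  by (cases "d = 0") simp_all

lemma sum_lessThan_mult_split:
  "(\<Sum>t<n*d. f t) = (\<Sum>m<n. \<Sum>c<d. f (m*d + c :: nat))"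
proof -
  have "(\<Sum>c<d. f (m*d + c)) = sum f {m*d..<m*d + d}" for m
    using sum.shift_bounds_nat_ivl[of f 0 "m*d" d]
    by (simp add: atLeast0LessThan add.commute)
  then show ?thesis by (simp add: sum.nat_group)
qed

definition block_mat :: "nat \<Rightarrow> nat \<Rightarrow> (nat \<Rightarrow> nat \<Rightarrow> 'a mat) \<Rightarrow> 'a mat" where
  "block_mat n d B = mat (n*d) (n*d) (\<lambda>(i,j). B (i div d) (j div d) $$ (i mod d, j mod d))"

definition block_mult :: "nat \<Rightarrow> nat \<Rightarrow> (nat \<Rightarrow> nat \<Rightarrow> 'a :: semiring_0 mat) \<Rightarrow>
    (nat \<Rightarrow> nat \<Rightarrow> 'a mat) \<Rightarrow> nat \<Rightarrow> nat \<Rightarrow> 'a mat" where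
  "block_mult n d A B k l = mat d d (\<lambda>(a,b). \<Sum>m<n. (A k m * B m l) $$ (a,b))"

definition transpose_blocks :: "(nat \<Rightarrow> nat \<Rightarrow> 'a mat) \<Rightarrow> nat \<Rightarrow> nat \<Rightarrow> 'a mat" where
  "transpose_blocks B k l = (B l k)\<^sup>T"

definition diag_blocks :: "nat \<Rightarrow> (nat \<Rightarrow> 'a :: zero mat) \<Rightarrow> nat \<Rightarrow> nat \<Rightarrow> 'a mat" where
  "diag_blocks d D k l = (if k = l then D k else 0\<^sub>m d d)"

lemma block_mat_dim [simp]:
  "dim_row (block_mat n d B) = n*d" "dim_col (block_mat n d B) = n*d"
  by (simp_all add: block_mat_def)

lemma block_mat_index:
  "i < n*d \<Longrightarrow> j < n*d \<Longrightarrow>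
    block_mat n d B $$ (i,j) = B (i div d) (j div d) $$ (i mod d, j mod d)"
  by (simp add: block_mat_def)

lemma block_mat_cong:
  "(\<And>k l. k < n \<Longrightarrow> l < n \<Longrightarrow> A k l = B k l) \<Longrightarrow> block_mat n d A = block_mat n d B"
  unfolding block_mat_def by (intro eq_matI) (auto simp: block_div_less)

lemma blk_block_mat:
  assumes "k < n" "l < n" "B k l \<in> carrier_mat d d"
  shows "blk d (block_mat n d B) k l = B k l"
  using assms block_index_less[OF assms(1)] block_index_less[OF assms(2)]
  by (intro eq_matI) (auto simp: blk_def block_mat_index)

lemma block_mat_transpose:
  assumes "\<And>k l. k < n \<Longrightarrow> l < n \<Longrightarrow> B k l \<in> carrier_mat d d"
  shows "(block_mat n d B)\<^sup>T = block_mat n d (transpose_blocks B)"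
proof (rule eq_matI)
  fix i j assume "i < dim_row (block_mat n d (transpose_blocks B))"
    "j < dim_col (block_mat n d (transpose_blocks B))"
  then have i: "i < n*d" and j: "j < n*d" by auto
  then have "B (j div d) (i div d) \<in> carrier_mat d d" using assms block_div_less by blast
  then show "(block_mat n d B)\<^sup>T $$ (i, j) = block_mat n d (transpose_blocks B) $$ (i, j)"
    using i j block_mod_less[OF i] block_mod_less[OF j]
    by (simp add: block_mat_index transpose_blocks_def)
qed auto

lemma block_mat_diag_one: "block_mat n d (diag_blocks d (\<lambda>_. 1\<^sub>m d)) = 1\<^sub>m (n*d)"
proof (rule eq_matI)
  fix i j assume "i < dim_row (1\<^sub>m (n*d) :: 'a mat)" "j < dim_col (1\<^sub>m (n*d) :: 'a mat)"
  then have i: "i < n*d" and j: "j < n*d" by auto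
  have "i = j \<longleftrightarrow> i div d = j div d \<and> i mod d = j mod d"
    by (metis div_mult_mod_eq)
  then show "block_mat n d (diag_blocks d (\<lambda>_. 1\<^sub>m d)) $$ (i, j) = (1\<^sub>m (n*d) :: 'a mat) $$ (i, j)"
    using i j block_mod_less[OF i] block_mod_less[OF j]
    by (simp add: block_mat_index diag_blocks_def)
qed auto

lemma block_mult_carrier [simp]: "block_mult n d A B k l \<in> carrier_mat d d"
  by (simp add: block_mult_def)

lemma block_mat_mult:
  assumes "\<And>k m. k < n \<Longrightarrow> m < n \<Longrightarrow> A k m \<in> carrier_mat d d \<and> B k m \<in> carrier_mat d d"
  shows "block_mat n d A * block_mat n d B = block_mat n d (block_mult n d A B)"
proof (rule eq_matI)
  fix i j assume "i < dim_row (block_mat n d (block_mult n d A B))"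
    "j < dim_col (block_mat n d (block_mult n d A B))"
  then have i: "i < n*d" and j: "j < n*d" by auto
  have "(block_mat n d A * block_mat n d B) $$ (i,j) =
      (\<Sum>t<n*d. block_mat n d A $$ (i,t) * block_mat n d B $$ (t,j))"
    using i j by (simp add: scalar_prod_def lessThan_atLeast0)
  also have "\<dots> = (\<Sum>m<n. \<Sum>c<d. block_mat n d A $$ (i, m*d + c) * block_mat n d B $$ (m*d + c, j))"
    by (rule sum_lessThan_mult_split)
  also have "\<dots> = (\<Sum>m<n. (A (i div d) m * B m (j div d)) $$ (i mod d, j mod d))"
  proof (rule sum.cong[OF refl])
    fix m assume m: "m \<in> {..<n}"
    have "A (i div d) m \<in> carrier_mat d d" "B m (j div d) \<in> carrier_mat d d"
      using assms block_div_less[OF i] block_div_less[OF j] m by auto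
    then show "(\<Sum>c<d. block_mat n d A $$ (i, m*d + c) * block_mat n d B $$ (m*d + c, j)) =
        (A (i div d) m * B m (j div d)) $$ (i mod d, j mod d)"
      using m i j block_mod_less[OF i] block_mod_less[OF j] block_index_less[of m n]
      by (simp add: block_mat_index scalar_prod_def lessThan_atLeast0)
  qed
  also have "\<dots> = block_mat n d (block_mult n d A B) $$ (i,j)"
    using i j block_mod_less[OF i] block_mod_less[OF j] by (simp add: block_mat_index block_mult_def)
  finally show "(block_mat n d A * block_mat n d B) $$ (i,j) = block_mat n d (block_mult n d A B) $$ (i,j)" .
qed auto

lemma block_mult_single:
  assumes "m0 < n" "\<And>m. m < n \<Longrightarrow> m \<noteq> m0 \<Longrightarrow> A k m * B m l = 0\<^sub>m d d"
    and "A k m0 * B m0 l \<in> carrier_mat d d"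
  shows "block_mult n d A B k l = A k m0 * B m0 l"
proof (rule eq_matI)
  fix a b assume "a < dim_row (A k m0 * B m0 l)" "b < dim_col (A k m0 * B m0 l)"
  then have a: "a < d" and b: "b < d" using assms(3) by auto
  have "(\<Sum>m<n. (A k m * B m l) $$ (a,b)) =
      (\<Sum>m<n. if m = m0 then (A k m0 * B m0 l) $$ (a,b) else 0)"
    using assms(2) a b by (intro sum.cong) auto
  also have "\<dots> = (A k m0 * B m0 l) $$ (a,b)" using assms(1) by simp
  finally show "block_mult n d A B k l $$ (a, b) = (A k m0 * B m0 l) $$ (a, b)"
    using a b by (simp add: block_mult_def)
qed (use assms(3) in \<open>auto simp: block_mult_def\<close>)

lemma block_mult_two:
  assumes "m0 < n" "m1 < n" "m0 \<noteq> m1"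
    and "\<And>m. m < n \<Longrightarrow> m \<noteq> m0 \<Longrightarrow> m \<noteq> m1 \<Longrightarrow> A k m * B m l = 0\<^sub>m d d"
    and "A k m0 * B m0 l \<in> carrier_mat d d" "A k m1 * B m1 l \<in> carrier_mat d d"
  shows "block_mult n d A B k l = A k m0 * B m0 l + A k m1 * B m1 l"
proof (rule eq_matI)
  fix a b assume "a < dim_row (A k m0 * B m0 l + A k m1 * B m1 l)"
    "b < dim_col (A k m0 * B m0 l + A k m1 * B m1 l)"
  then have a: "a < d" and b: "b < d" using assms(6) by auto
  have "(\<Sum>m<n. (A k m * B m l) $$ (a,b)) =
      (\<Sum>m<n. (if m = m0 then (A k m0 * B m0 l) $$ (a,b) else 0) +
              (if m = m1 then (A k m1 * B m1 l) $$ (a,b) else 0))"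
    using assms(3,4) a b by (intro sum.cong) auto
  also have "\<dots> = (A k m0 * B m0 l) $$ (a,b) + (A k m1 * B m1 l) $$ (a,b)"
    using assms(1,2) by (simp add: sum.distrib)
  finally show "block_mult n d A B k l $$ (a, b) = (A k m0 * B m0 l + A k m1 * B m1 l) $$ (a, b)"
    using a b assms(5,6) unfolding carrier_mat_def by (simp add: block_mult_def)
qed (use assms(5,6) in \<open>auto simp: block_mult_def\<close>)

lemma diag_blocks_carrier:
  "D k \<in> carrier_mat d d \<Longrightarrow> diag_blocks d D k l \<in> carrier_mat d d"
  by (auto simp: diag_blocks_def)

lemma block_mult_diag_right:
  assumes "l < n" "\<And>m. m < n \<Longrightarrow> A k m \<in> carrier_mat d d" "D l \<in> carrier_mat d d"
  shows "block_mult n d A (diag_blocks d D) k l = A k l * D l"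
proof -
  have "block_mult n d A (diag_blocks d D) k l = A k l * diag_blocks d D l l"
  proof (rule block_mult_single)
    show "A k m * diag_blocks d D m l = 0\<^sub>m d d" if "m < n" "m \<noteq> l" for m
      using that right_mult_zero_mat[OF assms(2)] by (simp add: diag_blocks_def)
    show "A k l * diag_blocks d D l l \<in> carrier_mat d d"
      using assms by (auto simp: diag_blocks_def intro!: mult_carrier_mat)
  qed (rule assms(1))
  then show ?thesis by (simp add: diag_blocks_def)
qed

lemma index_mult_mult_transpose_mat:
  assumes "X \<in> carrier_mat d d" "Y \<in> carrier_mat d d" "Z \<in> carrier_mat d d" "a < d" "b < d"
  shows "(X * Y * Z\<^sup>T) $$ (a,b) = (\<Sum>p<d. \<Sum>q<d. X $$ (a,p) * Y $$ (p,q) * Z $$ (b,q))"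
  using assms by (simp add: scalar_prod_def lessThan_atLeast0 sum_distrib_left mult.assoc)

text \<open>Square instances of library rules: once the single dimension n is known, the simplifier
  can discharge their carrier premises, which it cannot do for the rectangular originals.\<close>

lemma square_mat_simps:
  fixes A B :: "'a :: ring_1 mat"
  assumes "A \<in> carrier_mat n n"
  shows "0\<^sub>m m n * A = 0\<^sub>m m n" "A * 0\<^sub>m n m = 0\<^sub>m n m" "1\<^sub>m n * A = A" "A * 1\<^sub>m n = A"
    and "B \<in> carrier_mat n n \<Longrightarrow> A * B \<in> carrier_mat n n"
    and "B \<in> carrier_mat n n \<Longrightarrow> - A * B = - (A * B)"
    and "B \<in> carrier_mat n n \<Longrightarrow> B * - A = - (B * A)"
  using assms by auto

lemma minv_eqI:
  assumes "A \<in> carrier_mat n n" "B \<in> carrier_mat n n" "A * B = 1\<^sub>m n" "B * A = 1\<^sub>m n"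
  shows "minv A = B"
proof -
  let ?inverse = "\<lambda>B. B \<in> carrier_mat (dim_row A) (dim_row A) \<and>
    A * B = 1\<^sub>m (dim_row A) \<and> B * A = 1\<^sub>m (dim_row A)"
  have "?inverse B" using assms by auto
  then have inv: "?inverse (minv A)" unfolding minv_def by (rule someI)
  then have "minv A \<in> carrier_mat n n" using assms(1) by auto
  then have "minv A = minv A * (A * B)" using assms(3) by simp
  also have "\<dots> = (minv A * A) * B" using inv assms by (metis assoc_mult_mat carrier_matD(1))
  finally show ?thesis using inv assms by simp
qed

lemma spd_minv:
  assumes "spd d Q"
  shows "minv Q \<in> carrier_mat d d" "Q * minv Q = 1\<^sub>m d" "minv Q * Q = 1\<^sub>m d"
proof -
  have Q: "Q \<in> carrier_mat d d" using assms by (simp add: spd_def)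
  have "det Q \<noteq> 0"
  proof
    assume "det Q = 0"
    then obtain v where v: "v \<in> carrier_vec d" "v \<noteq> 0\<^sub>v d" "Q *\<^sub>v v = 0\<^sub>v d"
      using det_0_iff_vec_prod_zero_field[OF Q] by auto
    then have "v \<bullet> (Q *\<^sub>v v) > 0" using assms unfolding spd_def by blast
    then show False using v by simp
  qed
  then obtain B where B: "B * Q = 1\<^sub>m d" "B \<in> carrier_mat d d"
    using det_non_zero_imp_unit[OF Q, of "()"] unfolding Units_def ring_mat_def by auto
  moreover have "Q * B = 1\<^sub>m d" using mat_mult_left_right_inverse[OF B(2) Q B(1)] .
  ultimately have "minv Q = B" using minv_eqI[OF Q B(2)] by blast
  then show "minv Q \<in> carrier_mat d d" "Q * minv Q = 1\<^sub>m d" "minv Q * Q = 1\<^sub>m d"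
    using B \<open>Q * B = 1\<^sub>m d\<close> by simp_all
qed

lemma minv_congruence:
  fixes G L D D' :: "real mat"
  assumes G: "G \<in> carrier_mat n n" and L: "L \<in> carrier_mat n n"
    and D: "D \<in> carrier_mat n n" and D': "D' \<in> carrier_mat n n"
    and LG: "L * G = 1\<^sub>m n" and DD': "D * D' = 1\<^sub>m n"
  shows "minv (G * D * G\<^sup>T) = L\<^sup>T * D' * L"
proof (rule minv_eqI)
  have Gt: "G\<^sup>T \<in> carrier_mat n n" and Lt: "L\<^sup>T \<in> carrier_mat n n" using G L by simp_all
  have GD: "G * D \<in> carrier_mat n n" and D'L: "D' * L \<in> carrier_mat n n"
    using G D D' L by simp_all
  have "(G * D * G\<^sup>T) * (L\<^sup>T * D' * L) = (G * D) * ((G\<^sup>T * L\<^sup>T) * (D' * L))"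
    by (simp only: assoc_mult_mat[OF Lt D' L] assoc_mult_mat[OF Gt Lt D'L]
        assoc_mult_mat[OF GD Gt mult_carrier_mat[OF Lt D'L]])
  also have "G\<^sup>T * L\<^sup>T = 1\<^sub>m n" using transpose_mult[OF L G] LG by simp
  also have "(G * D) * (1\<^sub>m n * (D' * L)) = G * ((D * D') * L)"
    by (simp only: left_mult_one_mat[OF D'L] assoc_mult_mat[OF G D D'L] assoc_mult_mat[OF D D' L])
  also have "\<dots> = G * L" using DD' L by simp
  also have "\<dots> = 1\<^sub>m n" using mat_mult_left_right_inverse[OF L G LG] .
  finally show C: "(G * D * G\<^sup>T) * (L\<^sup>T * D' * L) = 1\<^sub>m n" .
  show "(L\<^sup>T * D' * L) * (G * D * G\<^sup>T) = 1\<^sub>m n"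
    by (rule mat_mult_left_right_inverse[OF _ _ C]) (use G L D D' in auto)
qed (use G L D D' in auto)

definition transition_blocks :: "(nat \<Rightarrow> real mat) \<Rightarrow> nat \<Rightarrow> nat \<Rightarrow> nat \<Rightarrow> real mat" where
  "transition_blocks F d k j = (if j \<le> k then Phi F d k j else 0\<^sub>m d d)"

definition difference_blocks :: "(nat \<Rightarrow> real mat) \<Rightarrow> nat \<Rightarrow> nat \<Rightarrow> nat \<Rightarrow> real mat" where
  "difference_blocks F d k j = (if k = j then 1\<^sub>m d else if k = Suc j then - F k else 0\<^sub>m d d)"

lemma trans_carrier:
  "(\<And>i. j < i \<Longrightarrow> i \<le> j + m \<Longrightarrow> F i \<in> carrier_mat d d) \<Longrightarrow> trans F d j m \<in> carrier_mat d d"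
  by (induction m) (auto intro!: mult_carrier_mat[of _ d d _ d])

lemma Phi_carrier:
  "(\<And>i. j < i \<Longrightarrow> i \<le> k \<Longrightarrow> F i \<in> carrier_mat d d) \<Longrightarrow> Phi F d k j \<in> carrier_mat d d"
  unfolding Phi_def by (rule trans_carrier) auto

lemma Phi_refl [simp]: "Phi F d k k = 1\<^sub>m d"
  by (simp add: Phi_def)

lemma Phi_step: "j < k \<Longrightarrow> Phi F d k j = F k * Phi F d (k - 1) j"
  by (cases k) (simp_all add: Phi_def Suc_diff_le)

context
  fixes d N :: nat and F Q :: "nat \<Rightarrow> real mat"
  assumes F_dim: "\<forall>k. 1 \<le> k \<and> k \<le> N \<longrightarrow> F k \<in> carrier_mat d d"
    and Q_spd: "\<forall>k \<le> N. spd d (Q k)"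
begin

lemma F_carrier: "0 < k \<Longrightarrow> k \<le> N \<Longrightarrow> F k \<in> carrier_mat d d"
  using F_dim by simp

lemma Q_carrier [simp]: "k \<le> N \<Longrightarrow> Q k \<in> carrier_mat d d"
  using Q_spd by (simp add: spd_def)

lemma minv_Q_carrier [simp]: "k \<le> N \<Longrightarrow> minv (Q k) \<in> carrier_mat d d"
  using spd_minv Q_spd by simp

lemma Q_mult_minv_Q: "k \<le> N \<Longrightarrow> Q k * minv (Q k) = 1\<^sub>m d"
  using spd_minv Q_spd by simp

lemma Phi_model_carrier [simp]: "k \<le> N \<Longrightarrow> Phi F d k j \<in> carrier_mat d d"
  by (intro Phi_carrier F_carrier) auto

lemma transition_blocks_carrier [simp]: "k \<le> N \<Longrightarrow> transition_blocks F d k j \<in> carrier_mat d d"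
  by (simp add: transition_blocks_def)

lemma difference_blocks_carrier [simp]: "k \<le> N \<Longrightarrow> difference_blocks F d k j \<in> carrier_mat d d"
  by (auto simp: difference_blocks_def intro: F_carrier)

lemma difference_mult_transition_blocks:
  assumes k: "k \<le> N" and l: "l \<le> N"
  shows "block_mult (Suc N) d (difference_blocks F d) (transition_blocks F d) k l =
    diag_blocks d (\<lambda>_. 1\<^sub>m d) k l"
proof (cases k)
  case 0
  then have "block_mult (Suc N) d (difference_blocks F d) (transition_blocks F d) k l =
      difference_blocks F d k 0 * transition_blocks F d 0 l"
    by (intro block_mult_single) (auto simp: difference_blocks_def square_mat_simps)
  then show ?thesis
    using 0 by (auto simp: difference_blocks_def transition_blocks_def diag_blocks_def)
next
  case (Suc k')
  have Fk: "F k \<in> carrier_mat d d" using Suc k F_carrier by simp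
  have "block_mult (Suc N) d (difference_blocks F d) (transition_blocks F d) k l =
      difference_blocks F d k k * transition_blocks F d k l +
      difference_blocks F d k k' * transition_blocks F d k' l"
    by (intro block_mult_two)
      (use Suc k Fk in \<open>auto simp: difference_blocks_def square_mat_simps F_carrier\<close>)
  also have "\<dots> = transition_blocks F d k l - F k * transition_blocks F d k' l"
    using Suc k Fk
    by (simp add: difference_blocks_def minus_add_uminus_mat[of _ d d] square_mat_simps)
  also have "\<dots> = diag_blocks d (\<lambda>_. 1\<^sub>m d) k l"
  proof (cases "l \<le> k'")
    case True
    then show ?thesis using Suc k Fk
      by (simp add: transition_blocks_def diag_blocks_def Phi_step square_mat_simps)
  next
    case False
    then show ?thesis using Suc k Fk
      by (auto simp: transition_blocks_def diag_blocks_def square_mat_simps)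
  qed
  finally show ?thesis .
qed

lemma markov_cov_eq_block_mat:
  "markov_cov d N F Q = block_mat (Suc N) d (\<lambda>k l. mat d d (\<lambda>(a,b).
     \<Sum>j\<in>{0..min k l}. (Phi F d k j * Q j * (Phi F d l j)\<^sup>T) $$ (a,b)))"
    (is "_ = block_mat (Suc N) d ?C")
proof (rule eq_matI)
  fix i j assume "i < dim_row (block_mat (Suc N) d ?C)" "j < dim_col (block_mat (Suc N) d ?C)"
  then have i: "i < Suc N * d" and j: "j < Suc N * d" by auto
  define k l a b where "k = i div d" and "l = j div d" and "a = i mod d" and "b = j mod d"
  have kl: "k \<le> N" "l \<le> N" and ab: "a < d" "b < d"
    using block_div_less[OF i] block_div_less[OF j] block_mod_less[OF i] block_mod_less[OF j]
    by (simp_all add: k_def l_def a_def b_def)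
  have "markov_cov d N F Q $$ (i,j) =
      (\<Sum>m\<in>{0..min k l}. \<Sum>p<d. \<Sum>q<d. Phi F d k m $$ (a,p) * Q m $$ (p,q) * Phi F d l m $$ (b,q))"
    using i j by (simp add: markov_cov_def k_def l_def a_def b_def Let_def)
  also have "\<dots> = (\<Sum>m\<in>{0..min k l}. (Phi F d k m * Q m * (Phi F d l m)\<^sup>T) $$ (a,b))"
    using kl ab by (intro sum.cong refl, subst index_mult_mult_transpose_mat) auto
  also have "\<dots> = block_mat (Suc N) d ?C $$ (i,j)"
    using i j ab by (simp add: block_mat_index k_def l_def a_def b_def)
  finally show "markov_cov d N F Q $$ (i,j) = block_mat (Suc N) d ?C $$ (i,j)" .
qed (auto simp: markov_cov_def)

lemma transition_diag_transpose_blocks: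
  assumes k: "k \<le> N" and l: "l \<le> N"
  shows "block_mult (Suc N) d (\<lambda>k m. transition_blocks F d k m * Q m)
      (transpose_blocks (transition_blocks F d)) k l =
    mat d d (\<lambda>(a,b). \<Sum>m\<in>{0..min k l}. (Phi F d k m * Q m * (Phi F d l m)\<^sup>T) $$ (a,b))"
proof -
  let ?term = "\<lambda>m. transition_blocks F d k m * Q m * transpose_blocks (transition_blocks F d) m l"
  have vanish: "?term m = 0\<^sub>m d d" if "m \<le> N" "\<not> (m \<le> k \<and> m \<le> l)" for m
    using that k l by (auto simp: transition_blocks_def transpose_blocks_def square_mat_simps)
  have "?term m = Phi F d k m * Q m * (Phi F d l m)\<^sup>T" if "m \<le> k" "m \<le> l" for m
    using that by (simp add: transition_blocks_def transpose_blocks_def)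
  then have "(\<Sum>m<Suc N. ?term m $$ (a,b)) =
      (\<Sum>m\<in>{0..min k l}. (Phi F d k m * Q m * (Phi F d l m)\<^sup>T) $$ (a,b))" if "a < d" "b < d" for a b
    using k that by (intro sum.mono_neutral_cong_right) (auto simp: vanish)
  then show ?thesis by (intro eq_matI) (auto simp: block_mult_def)
qed

lemma markov_cov_factorization:
  "markov_cov d N F Q = block_mat (Suc N) d (transition_blocks F d) *
    block_mat (Suc N) d (diag_blocks d Q) * (block_mat (Suc N) d (transition_blocks F d))\<^sup>T"
proof -
  let ?G = "transition_blocks F d"
  have "block_mat (Suc N) d ?G * block_mat (Suc N) d (diag_blocks d Q) =
      block_mat (Suc N) d (\<lambda>k m. ?G k m * Q m)"
    by (subst block_mat_mult)
      (auto simp: diag_blocks_carrier block_mult_diag_right intro!: block_mat_cong)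
  moreover have "(block_mat (Suc N) d ?G)\<^sup>T = block_mat (Suc N) d (transpose_blocks ?G)"
    by (rule block_mat_transpose) simp
  moreover have "block_mat (Suc N) d (\<lambda>k m. ?G k m * Q m) *
      block_mat (Suc N) d (transpose_blocks ?G) = markov_cov d N F Q"
    unfolding markov_cov_eq_block_mat
    by (subst block_mat_mult)
      (auto simp: transpose_blocks_def square_mat_simps transition_diag_transpose_blocks
        intro!: block_mat_cong)
  ultimately show ?thesis by simp
qed

lemma minv_markov_cov:
  "minv (markov_cov d N F Q) = block_mat (Suc N) d
     (block_mult (Suc N) d (\<lambda>k m. (difference_blocks F d m k)\<^sup>T * minv (Q m)) (difference_blocks F d))"
proof -
  let ?G = "block_mat (Suc N) d (transition_blocks F d)"
  let ?L = "block_mat (Suc N) d (difference_blocks F d)"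
  let ?D = "block_mat (Suc N) d (diag_blocks d Q)"
  let ?D' = "block_mat (Suc N) d (diag_blocks d (\<lambda>k. minv (Q k)))"
  let ?I = "block_mat (Suc N) d (diag_blocks d (\<lambda>_. 1\<^sub>m d))"
  have "?L * ?G = ?I"
    by (subst block_mat_mult) (auto simp: difference_mult_transition_blocks intro!: block_mat_cong)
  moreover have "?D * ?D' = ?I"
    by (subst block_mat_mult)
      (auto simp: diag_blocks_carrier block_mult_diag_right diag_blocks_def Q_mult_minv_Q
        square_mat_simps intro!: block_mat_cong)
  ultimately have "minv (markov_cov d N F Q) = ?L\<^sup>T * ?D' * ?L"
    unfolding markov_cov_factorization block_mat_diag_one by (intro minv_congruence) auto
  also have "?L\<^sup>T * ?D' = block_mat (Suc N) d (\<lambda>k m. (difference_blocks F d m k)\<^sup>T * minv (Q m))"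
    by (simp add: block_mat_transpose, subst block_mat_mult)
      (auto simp: transpose_blocks_def diag_blocks_carrier block_mult_diag_right intro!: block_mat_cong)
  also have "\<dots> * ?L = block_mat (Suc N) d
     (block_mult (Suc N) d (\<lambda>k m. (difference_blocks F d m k)\<^sup>T * minv (Q m)) (difference_blocks F d))"
    by (rule block_mat_mult) (simp add: square_mat_simps)
  finally show ?thesis .
qed

lemma blk_minv_markov_cov_diag:
  assumes "k < N"
  shows "blk d (minv (markov_cov d N F Q)) k k =
    minv (Q k) + (F (k+1))\<^sup>T * minv (Q (k+1)) * F (k+1)"
proof -
  let ?L = "difference_blocks F d"
  have F: "F (Suc k) \<in> carrier_mat d d" using assms F_carrier by simp
  have "blk d (minv (markov_cov d N F Q)) k k =
      block_mult (Suc N) d (\<lambda>k m. (?L m k)\<^sup>T * minv (Q m)) ?L k k"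
    unfolding minv_markov_cov using assms by (simp add: blk_block_mat)
  also have "\<dots> = (?L k k)\<^sup>T * minv (Q k) * ?L k k +
      (?L (Suc k) k)\<^sup>T * minv (Q (Suc k)) * ?L (Suc k) k"
    by (rule block_mult_two)
      (use assms F in \<open>auto simp: difference_blocks_def square_mat_simps F_carrier\<close>)
  finally show ?thesis using assms F
    by (simp add: difference_blocks_def transpose_uminus square_mat_simps[where n = d])
qed

lemma blk_minv_markov_cov_superdiag:
  assumes "k < N"
  shows "blk d (minv (markov_cov d N F Q)) k (k+1) = - ((F (k+1))\<^sup>T * minv (Q (k+1)))"
proof -
  let ?L = "difference_blocks F d"
  have F: "F (Suc k) \<in> carrier_mat d d" using assms F_carrier by simp
  have "blk d (minv (markov_cov d N F Q)) k (k+1) =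
      block_mult (Suc N) d (\<lambda>k m. (?L m k)\<^sup>T * minv (Q m)) ?L k (Suc k)"
    unfolding minv_markov_cov using assms by (simp add: blk_block_mat)
  also have "\<dots> = (?L (Suc k) k)\<^sup>T * minv (Q (Suc k)) * ?L (Suc k) (Suc k)"
    by (rule block_mult_single)
      (use assms F in \<open>auto simp: difference_blocks_def square_mat_simps F_carrier\<close>)
  finally show ?thesis using assms F
    by (simp add: difference_blocks_def transpose_uminus square_mat_simps[where n = d])
qed

end

theorem proposition4:
  fixes d N :: nat and F1 F2 Q1 Q2 :: "nat \<Rightarrow> real mat"
  assumes "0 < d"
    and "\<forall>k. 1 \<le> k \<and> k \<le> N \<longrightarrow> F1 k \<in> carrier_mat d d \<and> F2 k \<in> carrier_mat d d"
    and "\<forall>k \<le> N. spd d (Q1 k) \<and> spd d (Q2 k)"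
  shows "same_reciprocal_model d N (markov_cov d N F1 Q1) (markov_cov d N F2 Q2) \<longleftrightarrow>
    (\<forall>k. 1 \<le> k \<and> k < N \<longrightarrow>
        minv (Q1 k) + (F1 (k+1))\<^sup>T * minv (Q1 (k+1)) * F1 (k+1) =
        minv (Q2 k) + (F2 (k+1))\<^sup>T * minv (Q2 (k+1)) * F2 (k+1)) \<and>
    (\<forall>k. k < N \<longrightarrow>
        (F1 (k+1))\<^sup>T * minv (Q1 (k+1)) = (F2 (k+1))\<^sup>T * minv (Q2 (k+1)))"
proof -
  have model1: "\<forall>k. 1 \<le> k \<and> k \<le> N \<longrightarrow> F1 k \<in> carrier_mat d d" "\<forall>k \<le> N. spd d (Q1 k)"
    and model2: "\<forall>k. 1 \<le> k \<and> k \<le> N \<longrightarrow> F2 k \<in> carrier_mat d d" "\<forall>k \<le> N. spd d (Q2 k)"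
    using assms(2,3) by auto
  have uminus_mat_eq_iff: "- A = - B \<longleftrightarrow> A = B" for A B :: "real mat"
    by (metis uminus_uminus_mat)
  show ?thesis
    unfolding same_reciprocal_model_def
    using blk_minv_markov_cov_diag[OF model1] blk_minv_markov_cov_diag[OF model2]
      blk_minv_markov_cov_superdiag[OF model1] blk_minv_markov_cov_superdiag[OF model2]
    by (auto simp: uminus_mat_eq_iff)
qed

end
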